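(* Let $G=(V,E)$ with weight $\mu$ be an infinite, connected, locally finite weighted graph satisfying condition $(p_0)$, let $m>1$, and fix $o\in V$. Let $(p,q)\in G_3=\{(p,q): p<0,\ m-1<q<m\}$. Suppose there exist constants $C>0$ and $n_1$ such that $$W_o(n)\le C\, n^{\frac{q}{q-m+1}}(\ln n)^{\frac{m-1}{q-m+1}}\quad\text{for all } n\ge n_1.$$ Then the inequality $\Delta_m u+u^p|\nabla u|^q\le 0$ on $V$ admits no nontrivial positive solution.
   Context: Setting: $G=(V,E)$ is an infinite, connected, locally finite graph with no loops and no multiple edges; $x\sim y$ means $x$ and $y$ are joined by an edge. A weight is a symmetric function $\mu:V\times V\to[0,\infty)$ with $\mu_{xy}=\mu_{yx}>0$ if and only if $x\sim y$; the vertex measure is $\mu(x)=\sum_{y\sim x}\mu_{xy}$. For $m>1$ and $u:V\to\mathbb R$, $\Delta_m u(x)=\frac{1}{\mu(x)}\sum_{y\sim x}\mu_{xy}|u(y)-u(x)|^{m-2}(u(y)-u(x))$ and $|\nabla u(x)|=\big(\sum_{y\sim x}\frac{\mu_{xy}}{2\mu(x)}(u(y)-u(x))^2\big)^{1/2}$. Condition $(p_0)$: there is a constant $p_0>1$ such that $\mu_{xy}/\mu(x)\ge 1/p_0$ for all $x\sim y$. $d(x,y)$ is the graph (shortest path) distance, $B(o,n)=\{x\in V: d(o,x)\le n\}$, and $W_o(n)=\sum_{x\in B(o,n),\,y\in V,\,d(o,x)<d(o,y)}\mu_{xy}$. A nontrivial positive solution of $\Delta_m u+u^p|\nabla u|^q\le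 0$ is a non-constant function $u:V\to(0,\infty)$ such that $\Delta_m u(x)+u(x)^p|\nabla u(x)|^q\le 0$ for every $x\in V$, with the conventions $0^0=1$, $0^q=0$ for $q>0$, and, for $q<0$, $|\nabla u(x)|^q=+\infty$ when $|\nabla u(x)|=0$ (so the inequality fails at such $x$). *)

theory Defs
  imports Complex_Main
begin

definition adj :: "('a \<Rightarrow> 'a \<Rightarrow> real) \<Rightarrow> 'a \<Rightarrow> 'a \<Rightarrow> bool" where
  "adj mu x y \<longleftrightarrow> mu x y > 0"

definition weighted_graph :: "('a \<Rightarrow> 'a \<Rightarrow> real) \<Rightarrow> bool" where
  "weighted_graph mu \<longleftrightarrow>
     infinite (UNIV :: 'a set) \<and>
     (\<forall>x y. mu x y = mu y x) \<and>
     (\<forall>x y. mu x y \<ge> 0) \<and>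
     (\<forall>x. \<not> adj mu x x) \<and>
     (\<forall>x. finite {y. adj mu x y}) \<and>
     (\<forall>x y. (adj mu)\<^sup>*\<^sup>* x y)"

definition vmeasure :: "('a \<Rightarrow> 'a \<Rightarrow> real) \<Rightarrow> 'a \<Rightarrow> real" where
  "vmeasure mu x = (\<Sum>y\<in>{y. adj mu x y}. mu x y)"

definition cond_p0 :: "('a \<Rightarrow> 'a \<Rightarrow> real) \<Rightarrow> bool" where
  "cond_p0 mu \<longleftrightarrow> (\<exists>p0>1. \<forall>x y. adj mu x y \<longrightarrow> mu x y / vmeasure mu x \<ge> 1 / p0)"

definition mlap :: "real \<Rightarrow> ('a \<Rightarrow> 'a \<Rightarrow> real) \<Rightarrow> ('a \<Rightarrow> real) \<Rightarrow> 'a \<Rightarrow> real" where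
  "mlap m mu u x = (1 / vmeasure mu x) *
     (\<Sum>y\<in>{y. adj mu x y}. mu x y * \<bar>u y - u x\<bar> powr (m - 2) * (u y - u x))"

definition grad_norm :: "('a \<Rightarrow> 'a \<Rightarrow> real) \<Rightarrow> ('a \<Rightarrow> real) \<Rightarrow> 'a \<Rightarrow> real" where
  "grad_norm mu u x = sqrt (\<Sum>y\<in>{y. adj mu x y}. mu x y / (2 * vmeasure mu x) * (u y - u x)\<^sup>2)"

definition gdist :: "('a \<Rightarrow> 'a \<Rightarrow> real) \<Rightarrow> 'a \<Rightarrow> 'a \<Rightarrow> nat" where
  "gdist mu x y = (LEAST n. (adj mu ^^ n) x y)"

definition Wo :: "('a \<Rightarrow> 'a \<Rightarrow> real) \<Rightarrow> 'a \<Rightarrow> nat \<Rightarrow> real" where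
  "Wo mu o' n = (\<Sum>(x, y) \<in> {(x, y). gdist mu o' x \<le> n \<and> gdist mu o' x < gdist mu o' y \<and> adj mu x y}.
                   mu x y)"

text \<open>Conventions: 0^0 = 1, 0^q = 0 for q > 0, and for q < 0 the inequality
  fails where the gradient vanishes.\<close>
definition nontriv_pos_solution ::
  "real \<Rightarrow> real \<Rightarrow> real \<Rightarrow> ('a \<Rightarrow> 'a \<Rightarrow> real) \<Rightarrow> ('a \<Rightarrow> real) \<Rightarrow> bool" where
  "nontriv_pos_solution m p q mu u \<longleftrightarrow>
     (\<forall>x. u x > 0) \<and> (\<exists>x y. u x \<noteq> u y) \<and>
     (\<forall>x. (q < 0 \<longrightarrow> grad_norm mu u x \<noteq> 0) \<and>
          mlap m mu u x + u x powr p * (if q = 0 then 1 else grad_norm mu u x powr q) \<le> 0)"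

end

theory Submission
  imports Defs "HOL-Analysis.Harmonic_Numbers"
begin

(* Test the inequality against u^(-\<alpha>), with \<alpha> = (m - 1)(-p)/(q - m + 1) > 0, on the ball B(o, n).
   Summation by parts makes the contribution of the interior edges nonnegative, because the test
   function decreases where u increases; by condition (p0) the boundary edges are controlled by
   |\<nabla>u|^(m-1), that is by a power of the tested source term.  With \<theta> = (m - 1)/q, Hoelder's
   inequality then yields F_n \<le> c D_n^\<theta> w_n^(1-\<theta>), where D_n is the tested energy of the sphere of
   radius n, F_n = D_0 + ... + D_n, and w_n is the outward weight of the sphere, so that
   W_o(n) = w_0 + ... + w_n.

   If some D_n is positive, the partial sums of the series of D_n / F_n^(1/\<theta>) stay bounded,
   by comparison with the integral of t^(-1/\<theta>), whereas the reverse Hoelder inequality and the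
   growth bound on W_o force each dyadic block (N, 2N] of this series to contribute at least
   \<kappa> / ln (2N); along N = 2^k these contributions form a divergent harmonic series.  So the
   tested energy vanishes, which is impossible unless u is constant. *)

section \<open>Sequences and finite sums\<close>

lemma holder_sum:
  fixes x y :: "'b \<Rightarrow> real"
  assumes "finite K" "\<And>i. i \<in> K \<Longrightarrow> x i \<ge> 0" "\<And>i. i \<in> K \<Longrightarrow> y i \<ge> 0" "0 < r" "r < 1"
  shows "(\<Sum>i\<in>K. x i powr r * y i powr (1 - r)) \<le> (\<Sum>i\<in>K. x i) powr r * (\<Sum>i\<in>K. y i) powr (1 - r)"
proof -
  define X where "X = (\<Sum>i\<in>K. x i)"
  define Y where "Y = (\<Sum>i\<in>K. y i)"
  have "X \<ge> 0" "Y \<ge> 0"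
    using assms unfolding X_def Y_def by (auto intro: sum_nonneg)
  show ?thesis
  proof (cases "X = 0 \<or> Y = 0")
    case True
    then have "\<forall>i\<in>K. x i powr r * y i powr (1 - r) = 0"
      using assms unfolding X_def Y_def by (auto simp: sum_nonneg_eq_0_iff)
    then have "(\<Sum>i\<in>K. x i powr r * y i powr (1 - r)) = 0" by (intro sum.neutral) auto
    then show ?thesis by simp
  next
    case False
    with \<open>X \<ge> 0\<close> \<open>Y \<ge> 0\<close> have XY: "X > 0" "Y > 0" by auto
    have young: "x i powr r * y i powr (1 - r)
        \<le> X powr r * Y powr (1 - r) * (r * (x i / X) + (1 - r) * (y i / Y))" if "i \<in> K" for i
    proof (cases "x i = 0 \<or> y i = 0")
      case True
      then show ?thesis using XY assms that by (auto intro!: mult_nonneg_nonneg)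
    next
      case False
      then have "x i / X > 0" "y i / Y > 0" using assms that XY by (auto simp: less_le)
      then have "(x i / X) powr r * (y i / Y) powr (1 - r) \<le> r * (x i / X) + (1 - r) * (y i / Y)"
        using assms by (intro Youngs_inequality_0) auto
      then show ?thesis
        using XY assms that by (simp add: powr_divide pos_divide_le_eq mult.commute)
    qed
    have "(\<Sum>i\<in>K. x i powr r * y i powr (1 - r))
        \<le> (\<Sum>i\<in>K. X powr r * Y powr (1 - r) * (r * (x i / X) + (1 - r) * (y i / Y)))"
      by (rule sum_mono) (rule young)
    also have "\<dots> = X powr r * Y powr (1 - r) * (r * (\<Sum>i\<in>K. x i) / X + (1 - r) * (\<Sum>i\<in>K. y i) / Y)"
      by (simp add: sum_distrib_left sum.distrib sum_divide_distrib[symmetric] algebra_simps)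
    also have "\<dots> = X powr r * Y powr (1 - r)"
      using XY by (simp add: X_def[symmetric] Y_def[symmetric])
    finally show ?thesis by (simp add: X_def Y_def)
  qed
qed

lemma sum_pairs_nonneg_if_symmetrized_nonneg:
  fixes t :: "'b \<Rightarrow> 'b \<Rightarrow> real"
  assumes "finite B" and R_sym: "\<And>x y. R x y \<Longrightarrow> R y x"
    and pair_nonneg: "\<And>x y. x \<in> B \<Longrightarrow> y \<in> B \<Longrightarrow> R x y \<Longrightarrow> 0 \<le> t x y + t y x"
  shows "0 \<le> (\<Sum>x\<in>B. \<Sum>y\<in>{y\<in>B. R x y}. t x y)"
proof -
  have "(\<Sum>x\<in>B. \<Sum>y\<in>{y\<in>B. R x y}. t x y) = (\<Sum>y\<in>B. \<Sum>x\<in>{x\<in>B. R x y}. t x y)"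
    using \<open>finite B\<close> \<open>finite B\<close> by (rule sum.swap_restrict)
  also have "\<dots> = (\<Sum>x\<in>B. \<Sum>y\<in>{y\<in>B. R x y}. t y x)"
    using R_sym by (intro sum.cong refl arg_cong2[where f = sum]) auto
  finally have "2 * (\<Sum>x\<in>B. \<Sum>y\<in>{y\<in>B. R x y}. t x y) = (\<Sum>x\<in>B. \<Sum>y\<in>{y\<in>B. R x y}. t x y + t y x)"
    by (simp add: sum.distrib)
  also have "\<dots> \<ge> 0"
    using pair_nonneg by (intro sum_nonneg) auto
  finally show ?thesis by simp
qed

lemma diff_div_powr_le:
  fixes x y s :: real
  assumes "0 < x" "x \<le> y" "s > 1"
  shows "(y - x) / y powr s \<le> (x powr (1 - s) - y powr (1 - s)) / (s - 1)"
proof (cases "x = y")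
  case False
  with assms have "x < y" by auto
  have "\<And>t. x \<le> t \<Longrightarrow> ((\<lambda>t. t powr (1 - s)) has_real_derivative (1 - s) * t powr (1 - s - 1)) (at t)"
    using assms by (intro has_real_derivative_powr) auto
  then obtain z where z: "x < z" "z < y" "y powr (1 - s) - x powr (1 - s) = (y - x) * ((1 - s) * z powr (- s))"
    using MVT2[OF \<open>x < y\<close>] by fastforce
  have "(y - x) / y powr s = (y - x) * y powr (- s)"
    by (simp add: powr_minus divide_inverse)
  also have "\<dots> \<le> (y - x) * z powr (- s)"
    using z assms by (intro mult_left_mono powr_mono2') auto
  also have "\<dots> = (x powr (1 - s) - y powr (1 - s)) / (s - 1)"
    using z(3) assms by (simp add: field_simps)
  finally show ?thesis .
qed simp

lemma sum_increment_div_powr_le: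
  fixes F :: "nat \<Rightarrow> real"
  assumes "mono F" "0 < F L" "L \<le> M" "s > 1"
  shows "(\<Sum>n\<in>{L<..M}. (F n - F (n - 1)) / F n powr s) \<le> (F L powr (1 - s) - F M powr (1 - s)) / (s - 1)"
proof -
  have ivl: "{L<..M} = {Suc L..M}" by auto
  have "(\<Sum>n\<in>{L<..M}. (F n - F (n - 1)) / F n powr s)
      \<le> (\<Sum>n\<in>{Suc L..M}. (F (n - 1) powr (1 - s) - F n powr (1 - s)) / (s - 1))"
    unfolding ivl
  proof (rule sum_mono)
    fix n assume "n \<in> {Suc L..M}"
    then have "F L \<le> F (n - 1)" "F (n - 1) \<le> F n"
      using \<open>mono F\<close> by (auto simp: mono_def)
    then show "(F n - F (n - 1)) / F n powr s \<le> (F (n - 1) powr (1 - s) - F n powr (1 - s)) / (s - 1)"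
      using assms by (intro diff_div_powr_le) auto
  qed
  also have "\<dots> = - (\<Sum>n\<in>{Suc L..M}. F n powr (1 - s) - F (n - 1) powr (1 - s)) / (s - 1)"
    by (simp add: sum_divide_distrib[symmetric] sum_negf[symmetric])
  also have "\<dots> = (F L powr (1 - s) - F M powr (1 - s)) / (s - 1)"
    using sum_telescope''[OF \<open>L \<le> M\<close>, of "\<lambda>n. F n powr (1 - s)"] by simp
  finally show ?thesis .
qed

lemma sum_inverse_Suc_eq_harm_diff:
  "k0 \<le> K \<Longrightarrow> (\<Sum>k=k0..K. inverse (real k + 1)) = harm (Suc K) - harm k0"
  by (induction K rule: dec_induct) (simp_all add: harm_Suc add.commute)

lemma no_harmonic_descent:
  fixes g :: "nat \<Rightarrow> real"
  assumes "c > 0" "\<And>k. g k \<ge> 0" "\<And>k. k \<ge> k0 \<Longrightarrow> c / (real k + 1) \<le> g k - g (Suc k)"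
  shows False
proof -
  have bounded: "c * (harm (Suc K) - harm k0) \<le> g k0" if "k0 \<le> K" for K
  proof -
    have "c * (harm (Suc K) - harm k0) = (\<Sum>k=k0..K. c / (real k + 1))"
      using that by (simp add: divide_inverse sum_distrib_left[symmetric] sum_inverse_Suc_eq_harm_diff)
    also have "\<dots> \<le> (\<Sum>k=k0..K. g k - g (Suc k))"
      using assms(3) by (intro sum_mono) auto
    also have "\<dots> = g k0 - g (Suc K)"
      using sum_Suc_diff[of k0 K "\<lambda>k. - g k"] that by simp
    finally show ?thesis using assms(2)[of "Suc K"] by linarith
  qed
  have "eventually (\<lambda>n. harm n > g k0 / c + harm k0) sequentially"
    using harm_at_top filterlim_at_top_dense by blast
  then obtain N where "\<forall>n\<ge>N. harm n > g k0 / c + harm k0"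
    by (auto simp: eventually_sequentially)
  then have "harm (Suc (max N k0)) > g k0 / c + harm k0" by simp
  with bounded[of "max N k0"] assms(1) show False
    by (simp add: field_simps)
qed

lemma card_div_le_reverse_holder:
  fixes D w F :: "'b \<Rightarrow> real"
  assumes "finite K" "0 < r" "r < 1" "c > 0"
    and "\<And>i. i \<in> K \<Longrightarrow> D i \<ge> 0" "\<And>i. i \<in> K \<Longrightarrow> w i \<ge> 0" "\<And>i. i \<in> K \<Longrightarrow> F i > 0"
    and reverse_holder: "\<And>i. i \<in> K \<Longrightarrow> F i \<le> c * D i powr r * w i powr (1 - r)"
  shows "card K / c \<le> (\<Sum>i\<in>K. D i / F i powr (1 / r)) powr r * (\<Sum>i\<in>K. w i) powr (1 - r)"
proof -
  have "1 / c \<le> (D i / F i powr (1 / r)) powr r * w i powr (1 - r)" if "i \<in> K" for i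
  proof -
    have "(D i / F i powr (1 / r)) powr r = D i powr r / F i"
      using assms that by (simp add: powr_divide powr_powr less_imp_le)
    then show ?thesis
      using reverse_holder[OF that] assms that by (simp add: field_simps)
  qed
  then have "card K / c \<le> (\<Sum>i\<in>K. (D i / F i powr (1 / r)) powr r * w i powr (1 - r))"
    using sum_mono[of K "\<lambda>_. 1 / c"] by simp
  also have "\<dots> \<le> (\<Sum>i\<in>K. D i / F i powr (1 / r)) powr r * (\<Sum>i\<in>K. w i) powr (1 - r)"
    using assms by (intro holder_sum) auto
  finally show ?thesis .
qed

lemma dyadic_block_lower_bound:
  fixes D w F :: "nat \<Rightarrow> real" and c C r :: real and N :: nat
  assumes D: "\<And>n. D n \<ge> 0" and w: "\<And>n. w n \<ge> 0"
    and r: "0 < r" "r < 1" and "c > 0" "C > 0" "N \<ge> 1"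
    and F_pos: "\<And>n. n \<in> {N<..2*N} \<Longrightarrow> F n > 0"
    and reverse_holder: "\<And>n. n \<in> {N<..2*N} \<Longrightarrow> F n \<le> c * D n powr r * w n powr (1 - r)"
    and growth: "(\<Sum>n\<in>{N<..2*N}. w n)
      \<le> C * real (2*N) powr (1 / (1 - r)) * ln (real (2*N)) powr (r / (1 - r))"
  shows "(1 / (2 * c * C powr (1 - r))) powr (1 / r)
    \<le> (\<Sum>n\<in>{N<..2*N}. D n / F n powr (1 / r)) * ln (2 * real N)"
proof -
  define A where "A = (\<Sum>n\<in>{N<..2*N}. D n / F n powr (1 / r))"
  have "A \<ge> 0" unfolding A_def using D by (intro sum_nonneg) auto
  have "ln (2 * real N) > 0" using \<open>N \<ge> 1\<close> by simp
  have "(\<Sum>n\<in>{N<..2*N}. w n) powr (1 - r)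
      \<le> (C * real (2*N) powr (1 / (1 - r)) * ln (real (2*N)) powr (r / (1 - r))) powr (1 - r)"
    using growth r w by (intro powr_mono2 sum_nonneg) auto
  also have "\<dots> = C powr (1 - r) * (real (2*N) powr (1 / (1 - r))) powr (1 - r)
      * (ln (real (2*N)) powr (r / (1 - r))) powr (1 - r)"
    using \<open>C > 0\<close> by (simp add: powr_mult)
  also have "\<dots> = C powr (1 - r) * (2 * real N) * ln (2 * real N) powr r"
    using r \<open>ln (2 * real N) > 0\<close> by (simp add: powr_powr)
  finally have W: "(\<Sum>n\<in>{N<..2*N}. w n) powr (1 - r) \<le> C powr (1 - r) * (2 * real N) * ln (2 * real N) powr r" .
  have "real N / c \<le> A powr r * (\<Sum>n\<in>{N<..2*N}. w n) powr (1 - r)"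
    unfolding A_def using card_div_le_reverse_holder[of "{N<..2*N}" r c D w F] assms by simp
  also have "\<dots> \<le> A powr r * (C powr (1 - r) * (2 * real N) * ln (2 * real N) powr r)"
    using W by (intro mult_left_mono) auto
  finally have "1 / (2 * c * C powr (1 - r)) \<le> (A * ln (2 * real N)) powr r"
    using \<open>N \<ge> 1\<close> \<open>c > 0\<close> \<open>C > 0\<close> \<open>A \<ge> 0\<close> \<open>ln (2 * real N) > 0\<close> by (simp add: powr_mult field_simps)
  then have "(1 / (2 * c * C powr (1 - r))) powr (1 / r) \<le> ((A * ln (2 * real N)) powr r) powr (1 / r)"
    using \<open>c > 0\<close> \<open>C > 0\<close> r by (intro powr_mono2) auto
  also have "\<dots> = A * ln (2 * real N)"
    using r \<open>A \<ge> 0\<close> \<open>ln (2 * real N) > 0\<close> by (simp add: powr_powr)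
  finally show ?thesis unfolding A_def .
qed

lemma reverse_holder_growth_vanishing:
  fixes D w :: "nat \<Rightarrow> real" and c C r :: real and n1 :: nat
  assumes D: "\<And>n. D n \<ge> 0" and w: "\<And>n. w n \<ge> 0"
    and r: "0 < r" "r < 1" and "c > 0" "C > 0"
    and reverse_holder: "\<And>n. (\<Sum>k\<le>n. D k) \<le> c * D n powr r * w n powr (1 - r)"
    and growth: "\<And>n. n \<ge> n1 \<Longrightarrow>
      (\<Sum>k\<le>n. w k) \<le> C * real n powr (1 / (1 - r)) * ln (real n) powr (r / (1 - r))"
  shows "D n0 = 0"
proof (rule ccontr)
  assume "D n0 \<noteq> 0"
  define F where "F n = (\<Sum>k\<le>n. D k)" for n
  define G where "G n = F n powr (1 - 1 / r) / (1 / r - 1)" for n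
  define \<kappa> where "\<kappa> = (1 / (2 * c * C powr (1 - r))) powr (1 / r)"
  have "mono F"
    unfolding F_def mono_def using D by (intro allI impI sum_mono2) auto
  have F_pos: "F n > 0" if "n \<ge> n0" for n
  proof -
    have "0 < D n0" using D \<open>D n0 \<noteq> 0\<close> by (simp add: less_le)
    also have "\<dots> \<le> F n" unfolding F_def using that D by (intro member_le_sum) auto
    finally show ?thesis .
  qed
  have F_increment: "F n - F (n - 1) = D n" if "n > 0" for n
    using that by (cases n) (auto simp: F_def)
  obtain k0 where "2 ^ k0 \<ge> max n0 n1"
    using less_exp less_imp_le by blast
  have "\<kappa> / ln 2 / (real k + 1) \<le> G (2 ^ k) - G (2 ^ Suc k)" if "k \<ge> k0" for k
  proof -
    have "max n0 n1 \<le> (2::nat) ^ k"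
      using \<open>2 ^ k0 \<ge> max n0 n1\<close> by (rule order_trans) (simp add: power_increasing that)
    then have N: "2 ^ k \<ge> n0" "2 * 2 ^ k \<ge> n1" by auto
    have block_growth: "(\<Sum>n\<in>{2^k<..2*2^k}. w n)
        \<le> C * real (2 * 2^k) powr (1 / (1 - r)) * ln (real (2 * 2^k)) powr (r / (1 - r))"
      using w by (intro order_trans[OF _ growth[OF N(2)]] sum_mono2) auto
    have "\<kappa> \<le> (\<Sum>n\<in>{2^k<..2*2^k}. D n / F n powr (1 / r)) * ln (2 * real ((2::nat) ^ k))"
      unfolding \<kappa>_def using F_pos N reverse_holder
      by (intro dyadic_block_lower_bound[OF D w r \<open>c > 0\<close> \<open>C > 0\<close> _ _ _ block_growth])
        (auto simp: F_def)
    moreover have "ln (2 * 2 ^ k) = ln 2 * (real k + 1)"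
      using ln_realpow[of 2 "Suc k"] by simp
    ultimately have "\<kappa> / ln 2 / (real k + 1) \<le> (\<Sum>n\<in>{2^k<..2*2^k}. D n / F n powr (1 / r))"
      by (simp add: pos_divide_le_eq)
    also have "\<dots> = (\<Sum>n\<in>{2^k<..2*2^k}. (F n - F (n - 1)) / F n powr (1 / r))"
      using F_increment by (intro sum.cong) auto
    also have "\<dots> \<le> G (2 ^ k) - G (2 ^ Suc k)"
      unfolding G_def using sum_increment_div_powr_le[OF \<open>mono F\<close> F_pos[OF N(1)], of "2 * 2 ^ k" "1 / r"] r
      by (simp add: diff_divide_distrib)
    finally show ?thesis .
  qed
  moreover have "\<kappa> / ln 2 > 0" using \<open>c > 0\<close> \<open>C > 0\<close> by (simp add: \<kappa>_def)
  moreover have "G k \<ge> 0" for k using r by (simp add: G_def)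
  ultimately show False
    by (intro no_harmonic_descent[of "\<kappa> / ln 2" "\<lambda>k. G (2 ^ k)" k0]) auto
qed

section \<open>Weighted graphs\<close>

lemma gdist_le: "(adj mu ^^ n) x y \<Longrightarrow> gdist mu x y \<le> n"
  unfolding gdist_def by (rule Least_le)

definition out_weight :: "('a \<Rightarrow> 'a \<Rightarrow> real) \<Rightarrow> 'a \<Rightarrow> 'a \<Rightarrow> real" where
  "out_weight mu o' x = (\<Sum>y | adj mu x y \<and> gdist mu o' x < gdist mu o' y. mu x y)"

definition sphere_out_weight :: "('a \<Rightarrow> 'a \<Rightarrow> real) \<Rightarrow> 'a \<Rightarrow> nat \<Rightarrow> real" where
  "sphere_out_weight mu o' k = (\<Sum>x | gdist mu o' x = k. out_weight mu o' x)"

definition flux :: "real \<Rightarrow> ('a \<Rightarrow> real) \<Rightarrow> 'a \<Rightarrow> 'a \<Rightarrow> real" where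
  "flux m u x y = \<bar>u y - u x\<bar> powr (m - 2) * (u y - u x)"

lemma flux_swap: "flux m u y x = - flux m u x y"
  unfolding flux_def by (simp add: abs_minus_commute algebra_simps)

lemma flux_nonneg: "u x \<le> u y \<Longrightarrow> flux m u x y \<ge> 0"
  unfolding flux_def by simp

lemma neg_flux_le: "- flux m u x y \<le> \<bar>u y - u x\<bar> powr (m - 1)"
proof (cases "u y = u x")
  case False
  then have "\<bar>u y - u x\<bar> powr (m - 1) = \<bar>u y - u x\<bar> powr (m - 2) * \<bar>u y - u x\<bar>"
    using powr_add[of "\<bar>u y - u x\<bar>" "m - 2" 1] by simp
  moreover have "\<bar>u y - u x\<bar> powr (m - 2) * - (u y - u x) \<le> \<bar>u y - u x\<bar> powr (m - 2) * \<bar>u y - u x\<bar>"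
    by (intro mult_left_mono) auto
  ultimately show ?thesis unfolding flux_def by (simp add: algebra_simps)
qed (simp add: flux_def)

locale wgraph =
  fixes mu :: "'a \<Rightarrow> 'a \<Rightarrow> real"
  assumes weighted_graph: "weighted_graph mu"
begin

lemma sym: "mu x y = mu y x"
  using weighted_graph unfolding weighted_graph_def by blast

lemma nonneg: "mu x y \<ge> 0"
  using weighted_graph unfolding weighted_graph_def by blast

lemma adj_sym: "adj mu x y \<Longrightarrow> adj mu y x"
  unfolding adj_def by (simp add: sym)

lemma finite_adj: "finite {y. adj mu x y}"
  using weighted_graph unfolding weighted_graph_def by blast

lemma connected: "(adj mu)\<^sup>*\<^sup>* x y"
  using weighted_graph unfolding weighted_graph_def by blast

lemma gdist_walk: "(adj mu ^^ gdist mu x y) x y"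
  unfolding gdist_def using connected[of x y] by (metis LeastI_ex rtranclp_power)

lemma gdist_adj_le: "adj mu x y \<Longrightarrow> gdist mu o' y \<le> gdist mu o' x + 1"
  using gdist_le[OF relpowp_Suc_I[OF gdist_walk]] by simp

lemma finite_gdist_ball: "finite {x. gdist mu o' x \<le> n}"
proof (induction n)
  case 0
  have "{x. gdist mu o' x \<le> 0} \<subseteq> {o'}"
  proof
    fix x assume "x \<in> {x. gdist mu o' x \<le> 0}"
    then show "x \<in> {o'}" using gdist_walk[of o' x] by simp
  qed
  then show ?case by (rule finite_subset) simp
next
  case (Suc n)
  let ?B = "{x. gdist mu o' x \<le> n}"
  have "{x. gdist mu o' x \<le> Suc n} \<subseteq> ?B \<union> (\<Union>x\<in>?B. {y. adj mu x y})"
  proof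
    fix y assume "y \<in> {x. gdist mu o' x \<le> Suc n}"
    then consider "gdist mu o' y \<le> n" | "gdist mu o' y = Suc n" by force
    then show "y \<in> ?B \<union> (\<Union>x\<in>?B. {y. adj mu x y})"
    proof cases
      case 2
      then obtain z where "(adj mu ^^ n) o' z" "adj mu z y"
        using gdist_walk[of o' y] by (metis relpowp_Suc_E)
      then show ?thesis using gdist_le[of n mu o' z] by blast
    qed simp
  qed
  moreover have "finite (\<Union>x\<in>?B. {y. adj mu x y})"
    using Suc.IH finite_adj by blast
  ultimately show ?case
    using Suc.IH by (meson finite_Un finite_subset)
qed

lemma finite_gdist_sphere: "finite {x. gdist mu o' x = n}"
  by (rule finite_subset[OF _ finite_gdist_ball[of o' n]]) auto

lemma sum_gdist_ball_eq_sum_spheres: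
  "(\<Sum>x | gdist mu o' x \<le> n. f x) = (\<Sum>k\<le>n. \<Sum>x | gdist mu o' x = k. f x)"
proof -
  have "(\<Sum>x | gdist mu o' x \<le> n. f x)
      = (\<Sum>k\<le>n. \<Sum>x\<in>{x\<in>{x. gdist mu o' x \<le> n}. gdist mu o' x = k}. f x)"
    by (rule sum.group[symmetric]) (auto simp: finite_gdist_ball)
  also have "\<dots> = (\<Sum>k\<le>n. \<Sum>x | gdist mu o' x = k. f x)"
    by (intro sum.cong refl arg_cong2[where f = sum]) auto
  finally show ?thesis .
qed

lemma vmeasure_pos: "vmeasure mu x > 0"
proof -
  have "infinite (UNIV :: 'a set)"
    using weighted_graph unfolding weighted_graph_def by blast
  then obtain y where "y \<noteq> x"
    using ex_new_if_finite[of "{x}"] by blast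
  then obtain z where z: "adj mu x z"
    using connected[of x y] by (auto elim: converse_rtranclpE)
  then have "mu x z \<le> vmeasure mu x"
    unfolding vmeasure_def using finite_adj nonneg by (intro member_le_sum) auto
  with z show ?thesis by (simp add: adj_def)
qed

lemma nonconstant_imp_edge:
  fixes u :: "'a \<Rightarrow> real"
  assumes "u x \<noteq> u y"
  obtains x' y' where "adj mu x' y'" "u x' \<noteq> u y'"
proof -
  have "u x = u y" if "\<And>x' y'. adj mu x' y' \<Longrightarrow> u x' = u y'"
    using connected[of x y] by (induction rule: rtranclp_induct) (auto dest: that)
  with assms that show thesis by blast
qed

lemma out_weight_nonneg: "out_weight mu o' x \<ge> 0"
  unfolding out_weight_def by (intro sum_nonneg nonneg)

lemma out_weight_le_vmeasure: "out_weight mu o' x \<le> vmeasure mu x"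
  unfolding out_weight_def vmeasure_def using finite_adj nonneg by (intro sum_mono2) auto

lemma sphere_out_weight_nonneg: "sphere_out_weight mu o' k \<ge> 0"
  unfolding sphere_out_weight_def by (intro sum_nonneg out_weight_nonneg)

lemma Wo_eq_sum_sphere_out_weight: "Wo mu o' n = (\<Sum>k\<le>n. sphere_out_weight mu o' k)"
proof -
  have "{(x, y). gdist mu o' x \<le> n \<and> gdist mu o' x < gdist mu o' y \<and> adj mu x y}
      = Sigma {x. gdist mu o' x \<le> n} (\<lambda>x. {y. adj mu x y \<and> gdist mu o' x < gdist mu o' y})"
    by auto
  then have "Wo mu o' n = (\<Sum>x | gdist mu o' x \<le> n. out_weight mu o' x)"
    unfolding Wo_def out_weight_def
    by (simp add: sum.Sigma[symmetric] finite_gdist_ball finite_adj)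
  then show ?thesis by (simp add: sum_gdist_ball_eq_sum_spheres sphere_out_weight_def)
qed

lemma vmeasure_mult_mlap: "vmeasure mu x * mlap m mu u x = (\<Sum>y | adj mu x y. mu x y * flux m u x y)"
  unfolding mlap_def flux_def using vmeasure_pos[of x] by (simp add: mult.assoc)

end

section \<open>Positive supersolutions\<close>

locale supersolution = wgraph mu for mu :: "'a \<Rightarrow> 'a \<Rightarrow> real" +
  fixes m p q p0 :: real and u :: "'a \<Rightarrow> real"
  assumes m_gt_1: "m > 1" and p_neg: "p < 0" and q_gt: "q > m - 1"
    and p0_gt_1: "p0 > 1" and p0_bound: "\<And>x y. adj mu x y \<Longrightarrow> 1 / p0 \<le> mu x y / vmeasure mu x"
    and u_pos: "\<And>x. u x > 0"
    and super: "\<And>x. mlap m mu u x + u x powr p * grad_norm mu u x powr q \<le> 0"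
begin

definition \<theta> :: real where "\<theta> = (m - 1) / q"

definition \<alpha> :: real where "\<alpha> = (1 - m) * p / (q - m + 1)"

definition test :: "'a \<Rightarrow> real" where "test x = u x powr (- \<alpha>)"

definition tested_source :: "'a \<Rightarrow> real" where
  "tested_source x = u x powr p * grad_norm mu u x powr q * test x"

definition \<gamma> :: real where "\<gamma> = (2 * p0) powr ((m - 1) / 2)"

lemma q_pos: "q > 0"
  using m_gt_1 q_gt by simp

lemma theta_pos: "\<theta> > 0" and theta_lt_1: "\<theta> < 1"
  using m_gt_1 q_gt by (auto simp: \<theta>_def field_simps)

lemma one_minus_theta: "1 - \<theta> = (q - m + 1) / q"
  using q_pos by (simp add: \<theta>_def field_simps)

lemma alpha_pos: "\<alpha> > 0"
  using m_gt_1 p_neg q_gt by (auto simp: \<alpha>_def intro!: divide_pos_pos mult_neg_neg)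

lemma growth_exponents: "1 / (1 - \<theta>) = q / (q - m + 1)" "\<theta> / (1 - \<theta>) = (m - 1) / (q - m + 1)"
  using m_gt_1 q_gt unfolding one_minus_theta by (auto simp: \<theta>_def)

lemma gamma_pos: "\<gamma> > 0"
  using p0_gt_1 by (simp add: \<gamma>_def)

lemma test_pos: "test x > 0"
  unfolding test_def using u_pos[of x] by simp

lemma test_antimono: "u x \<le> u y \<Longrightarrow> test y \<le> test x"
  unfolding test_def using u_pos alpha_pos by (intro powr_mono2') auto

lemma grad_norm_term_nonneg: "mu x y / (2 * vmeasure mu x) * (u y - u x)\<^sup>2 \<ge> 0"
  using nonneg[of x y] vmeasure_pos[of x] by simp

lemma grad_norm_nonneg: "grad_norm mu u x \<ge> 0"
  unfolding grad_norm_def using grad_norm_term_nonneg by (intro real_sqrt_ge_zero sum_nonneg)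

lemma tested_source_nonneg: "tested_source x \<ge> 0"
  unfolding tested_source_def using test_pos[of x] by simp

lemma abs_diff_le_grad_norm:
  assumes "adj mu x y"
  shows "\<bar>u y - u x\<bar> \<le> sqrt (2 * p0) * grad_norm mu u x"
proof -
  have "1 / (2 * p0) * (u y - u x)\<^sup>2 \<le> mu x y / (2 * vmeasure mu x) * (u y - u x)\<^sup>2"
    using p0_bound[OF assms] by (intro mult_right_mono) auto
  also have "\<dots> \<le> (\<Sum>y | adj mu x y. mu x y / (2 * vmeasure mu x) * (u y - u x)\<^sup>2)"
    using assms finite_adj grad_norm_term_nonneg by (intro member_le_sum) auto
  also have "\<dots> = (grad_norm mu u x)\<^sup>2"
    unfolding grad_norm_def by (rule real_sqrt_pow2[symmetric], rule sum_nonneg, rule grad_norm_term_nonneg)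
  finally have "(u y - u x)\<^sup>2 \<le> 2 * p0 * (grad_norm mu u x)\<^sup>2"
    using p0_gt_1 by (simp add: field_simps)
  also have "\<dots> = (sqrt (2 * p0) * grad_norm mu u x)\<^sup>2"
    using p0_gt_1 by (simp add: power_mult_distrib)
  finally have "\<bar>u y - u x\<bar>\<^sup>2 \<le> (sqrt (2 * p0) * grad_norm mu u x)\<^sup>2"
    by simp
  then show ?thesis
    by (rule power2_le_imp_le) (use grad_norm_nonneg p0_gt_1 in simp)
qed

text \<open>The exponent \<alpha> is chosen exactly so that this identity holds.\<close>
lemma tested_source_powr_theta: "tested_source x powr \<theta> = grad_norm mu u x powr (m - 1) * test x"
proof -
  have "q - m + 1 \<noteq> 0" using q_gt by simp
  have "p - \<alpha> = p * q / (q - m + 1)"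
    using \<open>q - m + 1 \<noteq> 0\<close> by (simp add: \<alpha>_def field_simps)
  have "p * \<theta> + - \<alpha> * \<theta> = \<theta> * (p - \<alpha>)"
    by (simp add: algebra_simps)
  also have "\<dots> = (m - 1) / q * (p * q / (q - m + 1))"
    by (simp add: \<theta>_def \<open>p - \<alpha> = p * q / (q - m + 1)\<close>)
  also have "\<dots> = - \<alpha>"
    using q_pos \<open>q - m + 1 \<noteq> 0\<close> by (simp add: \<alpha>_def divide_simps) (simp add: algebra_simps)
  finally have exp_u: "p * \<theta> + - \<alpha> * \<theta> = - \<alpha>" .
  have exp_grad: "q * \<theta> = m - 1"
    using q_pos by (simp add: \<theta>_def)
  have "tested_source x powr \<theta>
      = u x powr (p * \<theta>) * grad_norm mu u x powr (q * \<theta>) * u x powr (- \<alpha> * \<theta>)"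
    unfolding tested_source_def test_def using u_pos[of x] grad_norm_nonneg[of x]
    by (simp add: powr_mult powr_powr)
  also have "\<dots> = grad_norm mu u x powr (q * \<theta>) * u x powr (p * \<theta> + - \<alpha> * \<theta>)"
    by (simp only: powr_add mult_ac)
  finally show ?thesis
    unfolding exp_u exp_grad test_def .
qed

lemma neg_flux_test_le:
  assumes "adj mu x y"
  shows "- flux m u x y * test x \<le> \<gamma> * tested_source x powr \<theta>"
proof -
  have "- flux m u x y \<le> \<bar>u y - u x\<bar> powr (m - 1)"
    by (rule neg_flux_le)
  also have "\<dots> \<le> (sqrt (2 * p0) * grad_norm mu u x) powr (m - 1)"
    using abs_diff_le_grad_norm[OF assms] m_gt_1 by (intro powr_mono2) auto
  also have "\<dots> = \<gamma> * grad_norm mu u x powr (m - 1)"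
    unfolding \<gamma>_def using p0_gt_1 grad_norm_nonneg[of x]
    by (simp add: powr_mult powr_half_sqrt[symmetric] powr_powr)
  finally have "- flux m u x y * test x \<le> \<gamma> * grad_norm mu u x powr (m - 1) * test x"
    using test_pos[of x] by (intro mult_right_mono) auto
  then show ?thesis
    by (simp add: tested_source_powr_theta mult.assoc)
qed

lemma vmeasure_tested_source_le:
  "vmeasure mu x * tested_source x \<le> - (\<Sum>y | adj mu x y. mu x y * flux m u x y * test x)"
proof -
  have "u x powr p * grad_norm mu u x powr q \<le> - mlap m mu u x"
    using super[of x] by simp
  then have "u x powr p * grad_norm mu u x powr q * test x \<le> - mlap m mu u x * test x"
    using test_pos[of x] by (intro mult_right_mono) auto
  then have "vmeasure mu x * tested_source x \<le> vmeasure mu x * (- mlap m mu u x * test x)"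
    unfolding tested_source_def using vmeasure_pos[of x] by (intro mult_left_mono) auto
  also have "\<dots> = - (\<Sum>y | adj mu x y. mu x y * flux m u x y * test x)"
    by (simp add: vmeasure_mult_mlap[symmetric] sum_distrib_right[symmetric])
  finally show ?thesis .
qed

text \<open>Summation by parts: across every edge, the flux and the increment of the test function,
  which decreases as u increases, have opposite signs.\<close>
lemma interior_flux_nonneg:
  assumes "finite B"
  shows "0 \<le> (\<Sum>x\<in>B. \<Sum>y\<in>{y\<in>B. adj mu x y}. mu x y * flux m u x y * test x)"
proof (rule sum_pairs_nonneg_if_symmetrized_nonneg[OF assms adj_sym])
  fix x y
  have "0 \<le> flux m u x y * (test x - test y)"
  proof (cases "u x \<le> u y")
    case True
    then show ?thesis using flux_nonneg[of u x y m] test_antimono[OF True] by simp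
  next
    case False
    then have "flux m u x y \<le> 0" "test x \<le> test y"
      using flux_nonneg[of u y x m] flux_swap[of m u y x] test_antimono[of y x] by auto
    then show ?thesis by (simp add: mult_nonpos_nonpos)
  qed
  moreover have "mu x y * flux m u x y * test x + mu y x * flux m u y x * test y
      = mu x y * (flux m u x y * (test x - test y))"
    by (simp add: sym[of y x] flux_swap[of m u y x] algebra_simps)
  ultimately show "0 \<le> mu x y * flux m u x y * test x + mu y x * flux m u y x * test y"
    using nonneg[of x y] by simp
qed

lemma boundary_flux_le:
  assumes "gdist mu o' x \<le> n"
  shows "(\<Sum>y \<in> {y. adj mu x y} - {y. gdist mu o' y \<le> n}. - (mu x y * flux m u x y * test x))
    \<le> (if gdist mu o' x = n
        then \<gamma> * out_weight mu o' x * tested_source x powr \<theta> else 0)"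
proof (cases "gdist mu o' x = n")
  case False
  with assms have no_exit: "{y. adj mu x y} - {y. gdist mu o' y \<le> n} = {}"
    using gdist_adj_le[of x _ o'] by fastforce
  from False show ?thesis unfolding no_exit by simp
next
  case True
  have "(\<Sum>y \<in> {y. adj mu x y} - {y. gdist mu o' y \<le> n}. - (mu x y * flux m u x y * test x))
      \<le> (\<Sum>y \<in> {y. adj mu x y} - {y. gdist mu o' y \<le> n}. mu x y * (\<gamma> * tested_source x powr \<theta>))"
  proof (rule sum_mono)
    fix y assume "y \<in> {y. adj mu x y} - {y. gdist mu o' y \<le> n}"
    then have "- flux m u x y * test x \<le> \<gamma> * tested_source x powr \<theta>"
      by (intro neg_flux_test_le) simp
    then show "- (mu x y * flux m u x y * test x) \<le> mu x y * (\<gamma> * tested_source x powr \<theta>)"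
      using nonneg[of x y] mult_left_mono by (fastforce simp: algebra_simps)
  qed
  also have "\<dots> \<le> (\<Sum>y | adj mu x y \<and> gdist mu o' x < gdist mu o' y. mu x y * (\<gamma> * tested_source x powr \<theta>))"
    using True finite_adj nonneg by (intro sum_mono2) (auto intro!: mult_nonneg_nonneg)
  also have "\<dots> = \<gamma> * out_weight mu o' x * tested_source x powr \<theta>"
    unfolding out_weight_def by (simp add: sum_distrib_left sum_distrib_right mult_ac)
  finally show ?thesis using True by simp
qed

lemma ball_energy_le_boundary:
  "(\<Sum>x | gdist mu o' x \<le> n. vmeasure mu x * tested_source x)
    \<le> \<gamma> * (\<Sum>x | gdist mu o' x = n. out_weight mu o' x * tested_source x powr \<theta>)"
proof -
  define B where "B = {x. gdist mu o' x \<le> n}"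
  define t where "t x y = mu x y * flux m u x y * test x" for x y
  have split: "(\<Sum>y | adj mu x y. t x y) = (\<Sum>y\<in>{y\<in>B. adj mu x y}. t x y) + (\<Sum>y\<in>{y. adj mu x y} - B. t x y)" for x
  proof -
    have "{y. adj mu x y} \<inter> B = {y\<in>B. adj mu x y}" by auto
    then show ?thesis using sum.Int_Diff[OF finite_adj, of "t x" x B] by simp
  qed
  have "(\<Sum>x\<in>B. vmeasure mu x * tested_source x) \<le> (\<Sum>x\<in>B. - (\<Sum>y | adj mu x y. t x y))"
    unfolding t_def by (intro sum_mono vmeasure_tested_source_le)
  also have "\<dots> = - (\<Sum>x\<in>B. \<Sum>y\<in>{y\<in>B. adj mu x y}. t x y) + (\<Sum>x\<in>B. \<Sum>y\<in>{y. adj mu x y} - B. - t x y)"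
    by (simp add: split sum.distrib sum_negf sum_subtractf)
  also have "\<dots> \<le> (\<Sum>x\<in>B. \<Sum>y\<in>{y. adj mu x y} - B. - t x y)"
    using interior_flux_nonneg[of B] finite_gdist_ball unfolding B_def t_def by simp
  also have "\<dots> \<le> (\<Sum>x\<in>B. if gdist mu o' x = n
      then \<gamma> * out_weight mu o' x * tested_source x powr \<theta> else 0)"
    unfolding B_def t_def by (intro sum_mono boundary_flux_le) simp
  also have "\<dots> = (\<Sum>x | gdist mu o' x = n. \<gamma> * out_weight mu o' x * tested_source x powr \<theta>)"
    unfolding B_def by (subst sum.inter_filter[OF finite_gdist_ball, symmetric]) (auto intro: sum.cong)
  finally show ?thesis
    unfolding B_def by (simp add: sum_distrib_left mult.assoc)
qed

definition sphere_energy :: "'a \<Rightarrow> nat \<Rightarrow> real" where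
  "sphere_energy o' k = (\<Sum>x | gdist mu o' x = k. vmeasure mu x * tested_source x)"

lemma sphere_energy_nonneg: "sphere_energy o' k \<ge> 0"
  unfolding sphere_energy_def using vmeasure_pos tested_source_nonneg
  by (intro sum_nonneg mult_nonneg_nonneg) (auto simp: less_imp_le)

lemma boundary_le_holder:
  "(\<Sum>x | gdist mu o' x = n. out_weight mu o' x * tested_source x powr \<theta>)
    \<le> sphere_energy o' n powr \<theta> * sphere_out_weight mu o' n powr (1 - \<theta>)"
proof -
  have "out_weight mu o' x * tested_source x powr \<theta>
      = (out_weight mu o' x * tested_source x) powr \<theta> * out_weight mu o' x powr (1 - \<theta>)" for x
    using out_weight_nonneg[of o' x] tested_source_nonneg[of x]
    by (cases "out_weight mu o' x = 0") (simp_all add: powr_mult powr_add[symmetric] mult_ac)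
  then have "(\<Sum>x | gdist mu o' x = n. out_weight mu o' x * tested_source x powr \<theta>)
      = (\<Sum>x | gdist mu o' x = n. (out_weight mu o' x * tested_source x) powr \<theta> * out_weight mu o' x powr (1 - \<theta>))"
    by simp
  also have "\<dots> \<le> (\<Sum>x | gdist mu o' x = n. out_weight mu o' x * tested_source x) powr \<theta>
      * sphere_out_weight mu o' n powr (1 - \<theta>)"
    unfolding sphere_out_weight_def using out_weight_nonneg tested_source_nonneg theta_pos theta_lt_1
    by (intro holder_sum finite_gdist_sphere mult_nonneg_nonneg) auto
  also have "\<dots> \<le> sphere_energy o' n powr \<theta> * sphere_out_weight mu o' n powr (1 - \<theta>)"
    unfolding sphere_energy_def
    using out_weight_le_vmeasure out_weight_nonneg tested_source_nonneg theta_pos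
    by (intro mult_right_mono powr_mono2 sum_mono sum_nonneg mult_nonneg_nonneg) auto
  finally show ?thesis .
qed

lemma sphere_energy_reverse_holder:
  "(\<Sum>k\<le>n. sphere_energy o' k)
    \<le> \<gamma> * sphere_energy o' n powr \<theta> * sphere_out_weight mu o' n powr (1 - \<theta>)"
proof -
  have "(\<Sum>k\<le>n. sphere_energy o' k) = (\<Sum>x | gdist mu o' x \<le> n. vmeasure mu x * tested_source x)"
    unfolding sphere_energy_def by (simp add: sum_gdist_ball_eq_sum_spheres)
  also have "\<dots> \<le> \<gamma> * (\<Sum>x | gdist mu o' x = n. out_weight mu o' x * tested_source x powr \<theta>)"
    by (rule ball_energy_le_boundary)
  also have "\<dots> \<le> \<gamma> * (sphere_energy o' n powr \<theta> * sphere_out_weight mu o' n powr (1 - \<theta>))"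
    using gamma_pos by (intro mult_left_mono boundary_le_holder) simp
  finally show ?thesis by (simp add: mult.assoc)
qed

lemma sphere_energy_nonzero:
  assumes "u x \<noteq> u y"
  obtains n where "sphere_energy o' n \<noteq> 0"
proof -
  obtain x' y' where edge: "adj mu x' y'" "u x' \<noteq> u y'"
    using nonconstant_imp_edge[OF assms] .
  have "0 < mu x' y' / (2 * vmeasure mu x') * (u y' - u x')\<^sup>2"
    using edge vmeasure_pos[of x'] by (simp add: adj_def)
  also have "\<dots> \<le> (\<Sum>y | adj mu x' y. mu x' y / (2 * vmeasure mu x') * (u y - u x')\<^sup>2)"
    using edge finite_adj grad_norm_term_nonneg by (intro member_le_sum) auto
  finally have "grad_norm mu u x' > 0"
    unfolding grad_norm_def by simp
  then have "0 < vmeasure mu x' * tested_source x'"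
    unfolding tested_source_def using vmeasure_pos[of x'] u_pos[of x'] test_pos[of x'] by simp
  also have "\<dots> \<le> sphere_energy o' (gdist mu o' x')"
    unfolding sphere_energy_def using finite_gdist_sphere vmeasure_pos tested_source_nonneg
    by (intro member_le_sum mult_nonneg_nonneg) (auto simp: less_imp_le)
  finally show thesis
    using that[of "gdist mu o' x'"] by simp
qed

end

theorem theorem1p1:
  fixes mu :: "'a \<Rightarrow> 'a \<Rightarrow> real" and o' :: 'a
    and m p q C :: real and n1 :: nat
  assumes "weighted_graph mu" and "cond_p0 mu" and "m > 1"
    and "p < 0" and "m - 1 < q" and "q < m"
    and "C > 0"
    and "\<forall>n\<ge>n1. Wo mu o' n \<le> C * real n powr (q / (q - m + 1)) * ln (real n) powr ((m - 1) / (q - m + 1))"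
  shows "\<not> (\<exists>u. nontriv_pos_solution m p q mu u)"
proof
  assume "\<exists>u. nontriv_pos_solution m p q mu u"
  then obtain u x y where u: "\<And>x. u x > 0" "u x \<noteq> u y"
    and super: "\<And>x. mlap m mu u x + u x powr p * grad_norm mu u x powr q \<le> 0"
    using \<open>m - 1 < q\<close> \<open>m > 1\<close> unfolding nontriv_pos_solution_def by auto
  obtain p0 where "p0 > 1" "\<And>x y. adj mu x y \<Longrightarrow> 1 / p0 \<le> mu x y / vmeasure mu x"
    using \<open>cond_p0 mu\<close> unfolding cond_p0_def by blast
  then interpret supersolution mu m p q p0 u
    using assms u super by unfold_locales auto
  have "sphere_energy o' n = 0" for n
  proof (rule reverse_holder_growth_vanishing[where c = "\<gamma>"])
    show "\<And>n. n \<ge> n1 \<Longrightarrow> (\<Sum>k\<le>n. sphere_out_weight mu o' k)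
        \<le> C * real n powr (1 / (1 - \<theta>)) * ln (real n) powr (\<theta> / (1 - \<theta>))"
      using assms(8) by (simp add: growth_exponents Wo_eq_sum_sphere_out_weight)
  qed (use sphere_energy_nonneg sphere_out_weight_nonneg theta_pos theta_lt_1 \<open>C > 0\<close> gamma_pos
      sphere_energy_reverse_holder in auto)
  with sphere_energy_nonzero[OF \<open>u x \<noteq> u y\<close>] show False by blast
qed

end
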